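(* Suppose that $\mathbf{unif}<\mathbf{b}$. Then there exists a nonprincipal filter on $\omega$ which is meager but not Lebesgue measurable (as a subset of $2^\omega$).
   Context: $\mathbf{b}$ is the smallest size of a family of functions in $\omega^\omega$ that is unbounded with respect to eventual domination; $\mathbf{unif}$ is the smallest size of a non-measurable (equivalently, not measure zero) subset of $2^\omega$. A filter on $\omega$ is identified with the set of characteristic functions of its elements, a subset of $2^\omega$, which carries the product topology and the standard product (Lebesgue) measure. *)

theory Defs
  imports "HOL-Analysis.Analysis" "HOL-Probability.Probability"
begin

text \<open>Cantor space 2^omega is the type nat => bool; it carries the product
topology (bool is discrete) via the library instance for function types.\<close>

definition nowhere_dense :: "(nat \<Rightarrow> bool) set \<Rightarrow> bool" where
  "nowhere_dense S \<longleftrightarrow> interior (closure S) = {}"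

definition meager :: "(nat \<Rightarrow> bool) set \<Rightarrow> bool" where
  "meager S \<longleftrightarrow> (\<exists>N :: nat \<Rightarrow> (nat \<Rightarrow> bool) set.
      (\<forall>n. nowhere_dense (N n)) \<and> S \<subseteq> (\<Union>n. N n))"

definition coin_measure :: "(nat \<Rightarrow> bool) measure" where
  "coin_measure = PiM UNIV (\<lambda>_::nat. measure_pmf (bernoulli_pmf (1/2)))"

definition lebesgue_measurable_cantor :: "(nat \<Rightarrow> bool) set \<Rightarrow> bool" where
  "lebesgue_measurable_cantor A \<longleftrightarrow> A \<in> sets (completion coin_measure)"

definition measure_zero_cantor :: "(nat \<Rightarrow> bool) set \<Rightarrow> bool" where
  "measure_zero_cantor A \<longleftrightarrow> A \<in> null_sets (completion coin_measure)"

definition eventually_dominated :: "(nat \<Rightarrow> nat) \<Rightarrow> (nat \<Rightarrow> nat) \<Rightarrow> bool" where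
  "eventually_dominated f g \<longleftrightarrow> (\<forall>\<^sub>F n in sequentially. f n \<le> g n)"

definition unbounded_family :: "(nat \<Rightarrow> nat) set \<Rightarrow> bool" where
  "unbounded_family F \<longleftrightarrow> \<not> (\<exists>g. \<forall>f\<in>F. eventually_dominated f g)"

text \<open>Since cardinals are well-ordered this is exactly
  min{|X| : X not null} < min{|F| : F unbounded}.\<close>

definition unif_less_b :: bool where
  "unif_less_b \<longleftrightarrow> (\<exists>X :: (nat \<Rightarrow> bool) set. \<not> measure_zero_cantor X \<and>
      (\<forall>F :: (nat \<Rightarrow> nat) set. unbounded_family F \<longrightarrow> (card_of X, card_of F) \<in> ordLess))"

definition filter_on_nat :: "nat set set \<Rightarrow> bool" where
  "filter_on_nat \<F> \<longleftrightarrow> UNIV \<in> \<F> \<and> {} \<notin> \<F> \<and>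
     (\<forall>A B. A \<in> \<F> \<longrightarrow> A \<subseteq> B \<longrightarrow> B \<in> \<F>) \<and>
     (\<forall>A B. A \<in> \<F> \<longrightarrow> B \<in> \<F> \<longrightarrow> A \<inter> B \<in> \<F>)"

definition nonprincipal :: "nat set set \<Rightarrow> bool" where
  "nonprincipal \<F> \<longleftrightarrow> (\<forall>A. finite (UNIV - A) \<longrightarrow> A \<in> \<F>)"

definition char_funs :: "nat set set \<Rightarrow> (nat \<Rightarrow> bool) set" where
  "char_funs \<F> = (\<lambda>A n. n \<in> A) ` \<F>"

end

theory Submission
  imports Defs "HOL-Algebra.Free_Abelian_Groups"
begin

(* Fix a non-null set X of size unif and a nonprincipal ultrafilter U. Replacing every x in X
   that is not in U by its complement gives a non-null family Y inside U with |Y| <= |X| < b.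
   Let F be the filter generated by Y and the cofinite sets. Its base consists of fewer than b
   sets S, so the functions n |-> min (S - {..<n}) are all dominated by one g; iterating g yields
   an interval partition of omega such that every member of F meets almost every interval,
   which makes F meager. F is not null since it contains Y. But a measurable filter containing
   the cofinite sets is invariant under finite modifications, hence has measure 0 or 1 by
   Kolmogorov's zero-one law, and it cannot have measure 1 because it is disjoint from its image
   under complementation, which has the same measure. *)

section \<open>Flipping coordinates preserves the coin-flipping measure\<close>

abbreviation fair_coin :: "bool measure" where
  "fair_coin \<equiv> measure_pmf (bernoulli_pmf (1/2))"

definition flip :: "nat set \<Rightarrow> (nat \<Rightarrow> bool) \<Rightarrow> nat \<Rightarrow> bool" where
  "flip s x = (\<lambda>i. if i \<in> s then \<not> x i else x i)"

lemma flip_flip [simp]: "flip s (flip s x) = x"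
  by (auto simp: flip_def)

lemma flip_empty [simp]: "flip {} x = x"
  by (simp add: flip_def)

lemma flip_flip_symdiff: "flip s (flip t x) = flip ((s - t) \<union> (t - s)) x"
  by (auto simp: flip_def)

lemma Collect_flip_UNIV: "{n. flip UNIV x n} = - {n. x n}"
  by (auto simp: flip_def)

lemma space_coin_measure [simp]: "space coin_measure = UNIV"
  by (simp add: coin_measure_def space_PiM)

lemma prob_space_coin_measure: "prob_space coin_measure"
  unfolding coin_measure_def by (intro prob_space_PiM) (simp add: prob_space_measure_pmf)

lemma map_pmf_Not_bernoulli_half: "map_pmf Not (bernoulli_pmf (1/2)) = bernoulli_pmf (1/2)"
proof (rule pmf_eqI)
  fix b
  have "Not -` {b} = {\<not> b}" by auto
  then show "pmf (map_pmf Not (bernoulli_pmf (1/2))) b = pmf (bernoulli_pmf (1/2)) b"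
    by (simp add: pmf_map measure_pmf_single)
qed

lemma measurable_flip [measurable]: "flip s \<in> coin_measure \<rightarrow>\<^sub>M coin_measure"
  unfolding coin_measure_def flip_def by (intro measurable_PiM_single') auto

lemma distr_flip_coin_measure: "distr coin_measure coin_measure (flip s) = coin_measure"
proof (rule measure_eqI_PiM_infinite[symmetric, of _ UNIV "\<lambda>_. fair_coin"])
  show "sets coin_measure = sets (PiM UNIV (\<lambda>_. fair_coin))"
    "sets (distr coin_measure coin_measure (flip s)) = sets (PiM UNIV (\<lambda>_. fair_coin))"
    by (simp_all add: coin_measure_def)
  show "finite_measure coin_measure"
    using prob_space_coin_measure by (simp add: prob_space_def)
  fix A J assume J: "finite J" "J \<subseteq> (UNIV :: nat set)" and A: "\<And>i. i \<in> J \<Longrightarrow> A i \<in> sets fair_coin"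
  let ?cyl = "prod_emb UNIV (\<lambda>_. fair_coin) J"
  let ?A' = "\<lambda>i. if i \<in> s then Not -` A i else A i"
  have Not_invariant: "emeasure fair_coin (Not -` C) = emeasure fair_coin C" for C
    by (metis emeasure_map_pmf map_pmf_Not_bernoulli_half)
  have "flip s -` ?cyl (Pi\<^sub>E J A) = ?cyl (Pi\<^sub>E J ?A')"
    unfolding prod_emb_def flip_def
    by (auto simp: PiE_iff extensional_def space_PiM) (drule (1) bspec, simp split: if_splits)+
  then have "emeasure (distr coin_measure coin_measure (flip s)) (?cyl (Pi\<^sub>E J A))
      = emeasure coin_measure (?cyl (Pi\<^sub>E J ?A'))"
    using J A measurable_flip[of s]
    by (subst emeasure_distr) (auto simp: coin_measure_def intro!: sets_PiM_I)
  also have "\<dots> = (\<Prod>i\<in>J. emeasure fair_coin (?A' i))"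
    unfolding coin_measure_def using J A by (intro emeasure_PiM_emb) (auto simp: prob_space_measure_pmf)
  also have "\<dots> = (\<Prod>i\<in>J. emeasure fair_coin (A i))"
    by (intro prod.cong) (auto simp: Not_invariant)
  also have "\<dots> = emeasure coin_measure (?cyl (Pi\<^sub>E J A))"
    unfolding coin_measure_def using J A by (intro emeasure_PiM_emb[symmetric]) (auto simp: prob_space_measure_pmf)
  finally show "emeasure coin_measure (?cyl (Pi\<^sub>E J A))
      = emeasure (distr coin_measure coin_measure (flip s)) (?cyl (Pi\<^sub>E J A))"
    by simp
qed

lemma flip_vimage_sets: "S \<in> sets coin_measure \<Longrightarrow> flip s -` S \<in> sets coin_measure"
  using measurable_sets[OF measurable_flip, of S s] by simp

lemma emeasure_flip_vimage:
  assumes "S \<in> sets coin_measure"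
  shows "emeasure coin_measure (flip s -` S) = emeasure coin_measure S"
  using emeasure_distr[OF measurable_flip assms, of s] by (simp add: distr_flip_coin_measure)

lemma flip_vimage_null_sets: "N \<in> null_sets coin_measure \<Longrightarrow> flip s -` N \<in> null_sets coin_measure"
  by (simp add: null_sets_def flip_vimage_sets emeasure_flip_vimage)

lemma measure_zero_cantor_subset:
  "measure_zero_cantor B \<Longrightarrow> A \<subseteq> B \<Longrightarrow> measure_zero_cantor A"
  unfolding measure_zero_cantor_def by (rule null_sets_completion_subset)

section \<open>A zero-one law for sets invariant under finite flips\<close>

definition coordinate_events :: "nat \<Rightarrow> (nat \<Rightarrow> bool) set set" where
  "coordinate_events i = sigma_sets UNIV {(\<lambda>x. x i) -` C | C. True}"

lemma indep_sets_coordinate_events: "prob_space.indep_sets coin_measure coordinate_events UNIV"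
proof -
  interpret prob_space coin_measure by (rule prob_space_coin_measure)
  have coordinate: "(\<lambda>x. x i) \<in> coin_measure \<rightarrow>\<^sub>M fair_coin" for i
    using measurable_component_singleton[of i UNIV "\<lambda>_. fair_coin"] by (simp add: coin_measure_def)
  have "distr coin_measure fair_coin (\<lambda>x. x i) = fair_coin" for i
    unfolding coin_measure_def by (rule distr_PiM_component) (auto simp: prob_space_measure_pmf)
  moreover have "(\<lambda>x. \<lambda>i\<in>UNIV. x i) = (\<lambda>x::nat\<Rightarrow>bool. x)"
    by (simp add: restrict_def)
  ultimately have "distr coin_measure (\<Pi>\<^sub>M i\<in>UNIV. fair_coin) (\<lambda>x. \<lambda>i\<in>UNIV. x i)
      = (\<Pi>\<^sub>M i\<in>UNIV. distr coin_measure fair_coin (\<lambda>x. x i))"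
    by (simp add: coin_measure_def distr_id)
  then have "indep_vars (\<lambda>_. fair_coin) (\<lambda>i x. x i) UNIV"
    using indep_vars_iff_distr_eq_PiM[where I=UNIV and M'="\<lambda>_. fair_coin" and X="\<lambda>i x. x i"] coordinate by simp
  then show ?thesis
    unfolding indep_vars_def coordinate_events_def by simp
qed

lemma measurable_drop_prefix:
  "(\<lambda>x i. if i < n then False else x i)
     \<in> sigma UNIV (\<Union>i\<in>{n..}. coordinate_events i) \<rightarrow>\<^sub>M coin_measure"
  unfolding coin_measure_def
proof (rule measurable_PiM_single')
  let ?M = "sigma UNIV (\<Union>i\<in>{n..}. coordinate_events i)"
  have sets_M: "sets ?M = sigma_sets UNIV (\<Union>i\<in>{n..}. coordinate_events i)"
    by (rule sets_measure_of) auto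
  fix i :: nat
  have "(\<lambda>x. x i) \<in> ?M \<rightarrow>\<^sub>M fair_coin" if "n \<le> i"
  proof (rule measurableI)
    fix C :: "bool set"
    have "(\<lambda>x. x i) -` C \<in> coordinate_events i"
      unfolding coordinate_events_def by (intro sigma_sets.Basic) auto
    then show "(\<lambda>x. x i) -` C \<inter> space ?M \<in> sets ?M"
      using that by (auto simp: sets_M)
  qed simp
  then show "(\<lambda>x. if i < n then False else x i) \<in> ?M \<rightarrow>\<^sub>M fair_coin"
    by (cases "i < n") simp_all
qed auto

lemma flip_invariant_tail_event:
  assumes B: "B \<in> sets coin_measure"
    and invariant: "\<And>t x. finite t \<Longrightarrow> flip t x \<in> B \<longleftrightarrow> x \<in> B"
  shows "B \<in> prob_space.tail_events coin_measure coordinate_events"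
  unfolding prob_space.tail_events_def[OF prob_space_coin_measure]
proof
  fix n :: nat
  \<comment> \<open>Clearing the first \<open>n\<close> coordinates is a finite flip, so it fixes \<open>B\<close>, and it only
    depends on the coordinates from \<open>n\<close> on.\<close>
  let ?p = "\<lambda>x i. if i < n then False else x i"
  have "?p x = flip {i. i < n \<and> x i} x" for x
    by (auto simp: flip_def)
  then have "?p -` B = B"
    using invariant by auto
  then show "B \<in> sigma_sets (space coin_measure) (\<Union>i\<in>{n..}. coordinate_events i)"
    using measurable_sets[OF measurable_drop_prefix B, of n] by (simp add: sets_measure_of_conv)
qed

lemma flip_invariant_prob_0_or_1:
  assumes "B \<in> sets coin_measure" and "\<And>t x. finite t \<Longrightarrow> flip t x \<in> B \<longleftrightarrow> x \<in> B"
  shows "measure coin_measure B = 0 \<or> measure coin_measure B = 1"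
proof (rule prob_space.kolmogorov_0_1_law[OF prob_space_coin_measure])
  show "sigma_algebra (space coin_measure) (coordinate_events i)" for i
    unfolding coordinate_events_def space_coin_measure by (rule sigma_algebra_sigma_sets) auto
qed (use assms in \<open>auto intro: indep_sets_coordinate_events flip_invariant_tail_event\<close>)

lemma flip_invariant_null_if_disjoint_from_flip:
  assumes B: "B \<in> sets coin_measure" and invariant: "\<And>t x. finite t \<Longrightarrow> flip t x \<in> B \<longleftrightarrow> x \<in> B"
    and disjoint: "B \<inter> flip UNIV -` B \<in> null_sets coin_measure"
  shows "B \<in> null_sets coin_measure"
proof -
  interpret prob_space coin_measure by (rule prob_space_coin_measure)
  let ?C = "flip UNIV -` B"
  have C: "?C \<in> sets coin_measure" "prob ?C = prob B"
    using B by (auto simp: flip_vimage_sets emeasure_flip_vimage measure_def)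
  have "?C - B = ?C - (B \<inter> ?C)"
    by blast
  then have "prob (?C - B) = prob B"
    using C disjoint by (simp add: measure_Diff_null_set)
  then have "prob (B \<union> ?C) = 2 * prob B"
    using B C by (simp add: finite_measure_Union')
  then have "prob B \<noteq> 1"
    using prob_le_1[of "B \<union> ?C"] by linarith
  then have "prob B = 0"
    using flip_invariant_prob_0_or_1[OF B invariant] by blast
  then show ?thesis
    using B by (simp add: emeasure_eq_measure null_sets_def)
qed

lemma completion_flip_closed_approx:
  assumes F: "F \<in> sets (completion coin_measure)"
    and closed: "\<And>s x. finite s \<Longrightarrow> x \<in> F \<Longrightarrow> flip s x \<in> F"
  obtains B N where "B \<in> sets coin_measure" "\<And>t x. finite t \<Longrightarrow> flip t x \<in> B \<longleftrightarrow> x \<in> B"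
    "N \<in> null_sets coin_measure" "F \<subseteq> B \<union> N" "B \<subseteq> F \<union> N"
proof -
  obtain S N0 N' where F_eq: "F = S \<union> N0" and "N0 \<subseteq> N'"
    and N': "N' \<in> null_sets coin_measure" and S: "S \<in> sets coin_measure"
    using F by (rule sets_completionE)
  \<comment> \<open>\<open>B\<close> is the largest flip-invariant subset of the measurable part \<open>S\<close> of \<open>F\<close>.\<close>
  define B where "B = (\<Inter>s\<in>{s. finite s}. flip s -` S)"
  define N where "N = (\<Union>s\<in>{s. finite s}. flip s -` N')"
  have "B \<in> sets coin_measure"
    unfolding B_def using S
    by (intro sets.countable_INT') (auto simp: countable_Collect_finite flip_vimage_sets)
  moreover have N: "N \<in> null_sets coin_measure"
    unfolding N_def using N'
    by (intro null_sets_UN') (auto simp: countable_Collect_finite flip_vimage_null_sets)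
  moreover have flip_B: "flip t x \<in> B" if "x \<in> B" "finite t" for t x
  proof -
    have "flip s (flip t x) \<in> S" if "finite s" for s
    proof -
      have "finite ((s - t) \<union> (t - s))"
        using \<open>finite s\<close> \<open>finite t\<close> by blast
      then show ?thesis
        using \<open>x \<in> B\<close> unfolding B_def flip_flip_symdiff by blast
    qed
    then show ?thesis
      unfolding B_def by blast
  qed
  then have "flip t x \<in> B \<longleftrightarrow> x \<in> B" if "finite t" for t x
    using flip_B[of "flip t x" t] that by auto
  moreover have "F \<subseteq> B \<union> N"
  proof
    fix x assume "x \<in> F"
    then have "flip s x \<in> S \<or> flip s x \<in> N'" if "finite s" for s
      using closed[OF that] F_eq \<open>N0 \<subseteq> N'\<close> by blast
    then show "x \<in> B \<union> N"
      by (auto simp: B_def N_def)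
  qed
  moreover have "B \<subseteq> F \<union> N"
  proof -
    have "B \<subseteq> flip {} -` S"
      unfolding B_def by blast
    then show ?thesis
      using F_eq by auto
  qed
  ultimately show ?thesis
    using that by blast
qed

section \<open>Filters on \<open>\<omega>\<close>\<close>

lemma filter_on_nat_UNIV: "filter_on_nat \<F> \<Longrightarrow> UNIV \<in> \<F>"
  by (simp add: filter_on_nat_def)

lemma filter_on_nat_empty: "filter_on_nat \<F> \<Longrightarrow> {} \<notin> \<F>"
  by (simp add: filter_on_nat_def)

lemma filter_on_nat_mono: "filter_on_nat \<F> \<Longrightarrow> A \<in> \<F> \<Longrightarrow> A \<subseteq> B \<Longrightarrow> B \<in> \<F>"
  unfolding filter_on_nat_def by metis

lemma filter_on_nat_Int: "filter_on_nat \<F> \<Longrightarrow> A \<in> \<F> \<Longrightarrow> B \<in> \<F> \<Longrightarrow> A \<inter> B \<in> \<F>"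
  unfolding filter_on_nat_def by metis

lemma filter_on_nat_Inter:
  assumes "filter_on_nat \<F>" "T \<in> Fpow \<F>"
  shows "\<Inter>T \<in> \<F>"
proof -
  have "finite T" "T \<subseteq> \<F>"
    using assms(2) by (auto simp: Fpow_def)
  then show ?thesis
    by (induction T rule: finite_induct) (auto intro: filter_on_nat_UNIV filter_on_nat_Int assms(1))
qed

lemma nonprincipal_contains_atLeast: "nonprincipal \<F> \<Longrightarrow> {m..} \<in> \<F>"
  by (simp add: nonprincipal_def Compl_eq_Diff_UNIV[symmetric])

lemma nonprincipal_filter_infinite:
  assumes "filter_on_nat \<F>" "nonprincipal \<F>" "A \<in> \<F>"
  shows "infinite A"
proof
  assume "finite A"
  then have "- A \<in> \<F>"
    using assms(2) by (simp add: nonprincipal_def Compl_eq_Diff_UNIV[symmetric])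
  then have "A \<inter> - A \<in> \<F>"
    by (rule filter_on_nat_Int[OF assms(1,3)])
  then show False
    using filter_on_nat_empty[OF assms(1)] by simp
qed

lemma char_funs_iff: "x \<in> char_funs \<F> \<longleftrightarrow> {n. x n} \<in> \<F>"
proof
  show "x \<in> char_funs \<F> \<Longrightarrow> {n. x n} \<in> \<F>"
    by (auto simp: char_funs_def)
  have "x = (\<lambda>n. n \<in> {n. x n})"
    by simp
  then show "{n. x n} \<in> \<F> \<Longrightarrow> x \<in> char_funs \<F>"
    unfolding char_funs_def by blast
qed

lemma filter_on_nat_chain_Union:
  assumes "C \<noteq> {}" "subset.chain {\<F>. filter_on_nat \<F>} C"
  shows "filter_on_nat (\<Union>C)"
  unfolding filter_on_nat_def
proof (intro conjI allI impI)
  have filters: "\<And>\<F>. \<F> \<in> C \<Longrightarrow> filter_on_nat \<F>"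
    and chain: "\<And>\<F> \<G>. \<F> \<in> C \<Longrightarrow> \<G> \<in> C \<Longrightarrow> \<F> \<subseteq> \<G> \<or> \<G> \<subseteq> \<F>"
    using assms(2) by (auto simp: subset_chain_def)
  show "UNIV \<in> \<Union>C"
    using assms(1) filters filter_on_nat_UNIV by blast
  show "{} \<notin> \<Union>C"
    using filters filter_on_nat_empty by blast
  show "B \<in> \<Union>C" if "A \<in> \<Union>C" "A \<subseteq> B" for A B
    using that filters filter_on_nat_mono by blast
  show "A \<inter> B \<in> \<Union>C" if AB: "A \<in> \<Union>C" "B \<in> \<Union>C" for A B
  proof -
    obtain \<F> \<G> where "\<F> \<in> C" "\<G> \<in> C" "A \<in> \<F>" "B \<in> \<G>"
      using AB by blast
    then show ?thesis
      using chain[of \<F> \<G>] filters filter_on_nat_Int by blast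
  qed
qed

lemma filter_on_nat_restrict:
  assumes filter: "filter_on_nat \<F>" and meets: "\<And>B. B \<in> \<F> \<Longrightarrow> B \<inter> A \<noteq> {}"
  shows "filter_on_nat {C. \<exists>B\<in>\<F>. B \<inter> A \<subseteq> C}"
proof (unfold filter_on_nat_def mem_Collect_eq, intro conjI allI impI)
  show "\<exists>B\<in>\<F>. B \<inter> A \<subseteq> UNIV"
    using filter_on_nat_UNIV[OF filter] by blast
  show "\<not> (\<exists>B\<in>\<F>. B \<inter> A \<subseteq> {})"
    using meets by blast
  show "\<exists>B\<in>\<F>. B \<inter> A \<subseteq> Y" if "\<exists>B\<in>\<F>. B \<inter> A \<subseteq> X" "X \<subseteq> Y" for X Y
    using that by blast
  show "\<exists>B\<in>\<F>. B \<inter> A \<subseteq> X \<inter> Y"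
    if XY: "\<exists>B\<in>\<F>. B \<inter> A \<subseteq> X" "\<exists>B\<in>\<F>. B \<inter> A \<subseteq> Y" for X Y
  proof -
    obtain B1 B2 where "B1 \<in> \<F>" "B2 \<in> \<F>" "B1 \<inter> A \<subseteq> X" "B2 \<inter> A \<subseteq> Y"
      using XY by blast
    then show ?thesis
      using filter_on_nat_Int[OF filter, of B1 B2] by (intro bexI[of _ "B1 \<inter> B2"]) auto
  qed
qed

lemma filter_on_nat_cofinite: "filter_on_nat {A. finite (- A)}"
  unfolding filter_on_nat_def
proof (intro conjI allI impI)
  show "B \<in> {A. finite (- A)}" if "A \<in> {A. finite (- A)}" "A \<subseteq> B" for A B
    using that finite_subset[of "- B" "- A"] by auto
qed auto

lemma nonprincipal_ultrafilter_exists: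
  "\<exists>\<U>. filter_on_nat \<U> \<and> nonprincipal \<U> \<and> (\<forall>A. A \<in> \<U> \<or> - A \<in> \<U>)"
proof -
  let ?P = "{\<F>. filter_on_nat \<F> \<and> nonprincipal \<F>}"
  have "{A. finite (- A)} \<in> ?P"
    using filter_on_nat_cofinite by (simp add: nonprincipal_def Compl_eq_Diff_UNIV)
  moreover have "\<Union>C \<in> ?P" if C: "C \<noteq> {}" "subset.chain ?P C" for C
  proof -
    have "subset.chain {\<F>. filter_on_nat \<F>} C"
      using C(2) by (auto simp: subset_chain_def)
    then have "filter_on_nat (\<Union>C)"
      using C(1) by (rule filter_on_nat_chain_Union[rotated])
    moreover have "nonprincipal (\<Union>C)"
      using C unfolding subset_chain_def nonprincipal_def by blast
    ultimately show ?thesis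
      by blast
  qed
  ultimately obtain \<U> where \<U>: "\<U> \<in> ?P" and maximal: "\<And>\<F>. \<F> \<in> ?P \<Longrightarrow> \<U> \<subseteq> \<F> \<Longrightarrow> \<F> = \<U>"
    using subset_Zorn_nonempty[of ?P] by blast
  have "A \<in> \<U> \<or> - A \<in> \<U>" for A
  proof (cases "\<exists>B\<in>\<U>. B \<inter> A = {}")
    case True
    then obtain B where "B \<in> \<U>" "B \<subseteq> - A"
      by blast
    then show ?thesis
      using \<U> filter_on_nat_mono by blast
  next
    case False
    let ?\<F> = "{C. \<exists>B\<in>\<U>. B \<inter> A \<subseteq> C}"
    have "?\<F> \<in> ?P"
      using \<U> False filter_on_nat_restrict[of \<U> A] by (auto simp: nonprincipal_def)
    moreover have "\<U> \<subseteq> ?\<F>"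
      by blast
    ultimately have "?\<F> = \<U>"
      by (rule maximal)
    moreover have "A \<in> ?\<F>"
      using \<U> filter_on_nat_UNIV by blast
    ultimately show ?thesis
      by simp
  qed
  then show ?thesis
    using \<U> by blast
qed

lemma not_null_family_in_ultrafilter:
  assumes X: "\<not> measure_zero_cantor X" and ultra: "\<And>A. A \<in> \<U> \<or> - A \<in> \<U>"
  obtains \<Y> where "\<Y> \<subseteq> \<U>" "|\<Y>| \<le>o |X|" "\<not> measure_zero_cantor (char_funs \<Y>)"
proof -
  define h where "h x = (if {n. x n} \<in> \<U> then x else flip UNIV x)" for x :: "nat \<Rightarrow> bool"
  define \<Y> where "\<Y> = (\<lambda>x. {n. h x n}) ` X"
  have "{n. h x n} \<in> \<U>" for x
    using ultra[of "{n. x n}"] by (auto simp: h_def Collect_flip_UNIV)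
  then have "\<Y> \<subseteq> \<U>"
    by (auto simp: \<Y>_def)
  moreover have "|\<Y>| \<le>o |X|"
    unfolding \<Y>_def by (rule card_of_image)
  moreover have "\<not> measure_zero_cantor (char_funs \<Y>)"
  proof
    assume "measure_zero_cantor (char_funs \<Y>)"
    moreover have "char_funs \<Y> = h ` X"
      by (simp add: char_funs_def \<Y>_def image_image)
    ultimately obtain N where N: "N \<in> null_sets coin_measure" "h ` X \<subseteq> N"
      by (auto simp: measure_zero_cantor_def null_sets_completion_iff2)
    have "X \<subseteq> N \<union> flip UNIV -` N"
    proof
      fix x assume "x \<in> X"
      then have "h x \<in> N"
        using N(2) by blast
      then show "x \<in> N \<union> flip UNIV -` N"
        unfolding h_def by (cases "{n. x n} \<in> \<U>") auto
    qed
    moreover have "N \<union> flip UNIV -` N \<in> null_sets coin_measure"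
      by (intro null_sets.Un N(1) flip_vimage_null_sets)
    ultimately show False
      using X unfolding measure_zero_cantor_def null_sets_completion_iff2 by blast
  qed
  ultimately show ?thesis
    using that by blast
qed

section \<open>Measurable nonprincipal filters are null\<close>

lemma nonprincipal_filter_flip_closed:
  assumes filter: "filter_on_nat \<F>" and "nonprincipal \<F>" "finite s" "x \<in> char_funs \<F>"
  shows "flip s x \<in> char_funs \<F>"
proof -
  obtain m where m: "s \<subseteq> {..<m}"
    using finite_nat_bounded[OF \<open>finite s\<close>] by blast
  have "{n. x n} \<inter> {m..} \<in> \<F>"
    using assms nonprincipal_contains_atLeast filter_on_nat_Int by (simp add: char_funs_iff)
  moreover have "{n. x n} \<inter> {m..} \<subseteq> {n. flip s x n}"
    using m by (auto simp: flip_def)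
  ultimately show ?thesis
    using filter_on_nat_mono[OF filter] by (simp add: char_funs_iff)
qed

lemma filter_flip_UNIV_notin:
  assumes "filter_on_nat \<F>" "x \<in> char_funs \<F>"
  shows "flip UNIV x \<notin> char_funs \<F>"
proof
  assume "flip UNIV x \<in> char_funs \<F>"
  then have "{n. x n} \<inter> - {n. x n} \<in> \<F>"
    using assms filter_on_nat_Int unfolding char_funs_iff Collect_flip_UNIV by blast
  then show False
    using filter_on_nat_empty[OF assms(1)] by simp
qed

lemma measurable_nonprincipal_filter_null:
  assumes filter: "filter_on_nat \<F>" and "nonprincipal \<F>"
    and "lebesgue_measurable_cantor (char_funs \<F>)"
  shows "measure_zero_cantor (char_funs \<F>)"
proof -
  obtain B N where B: "B \<in> sets coin_measure" "\<And>t x. finite t \<Longrightarrow> flip t x \<in> B \<longleftrightarrow> x \<in> B"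
    and N: "N \<in> null_sets coin_measure" and approx: "char_funs \<F> \<subseteq> B \<union> N" "B \<subseteq> char_funs \<F> \<union> N"
    using assms nonprincipal_filter_flip_closed
    by (auto simp: lebesgue_measurable_cantor_def elim: completion_flip_closed_approx)
  have "B \<inter> flip UNIV -` B \<subseteq> N \<union> flip UNIV -` N"
  proof
    fix x assume "x \<in> B \<inter> flip UNIV -` B"
    then have "x \<in> char_funs \<F> \<union> N" "flip UNIV x \<in> char_funs \<F> \<union> N"
      using approx(2) by auto
    then show "x \<in> N \<union> flip UNIV -` N"
      using filter_flip_UNIV_notin[OF filter, of x] by blast
  qed
  then have "B \<inter> flip UNIV -` B \<in> null_sets coin_measure"
    using B N flip_vimage_null_sets[OF N]
    by (meson null_sets.Un null_sets_subset sets.Int flip_vimage_sets)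
  then have "B \<union> N \<in> null_sets coin_measure"
    using flip_invariant_null_if_disjoint_from_flip B N by blast
  then show ?thesis
    using approx(1) by (auto simp: measure_zero_cantor_def null_sets_completion_iff2)
qed

section \<open>Meager sets in Cantor space\<close>

lemma meager_mono: "meager B \<Longrightarrow> A \<subseteq> B \<Longrightarrow> meager A"
  unfolding meager_def by blast

lemma closed_coordinate_True: "closed {x :: nat \<Rightarrow> bool. x i}"
proof -
  have "open {x :: nat \<Rightarrow> bool. \<forall>j\<in>{i}. x j \<in> {..<True}}"
    by (rule product_topology_basis') auto
  moreover have "{x :: nat \<Rightarrow> bool. \<forall>j\<in>{i}. x j \<in> {..<True}} = - {x. x i}"
    by auto
  ultimately show ?thesis
    by (simp add: closed_def)
qed

lemma closed_meets_intervals_from: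
  "closed {x :: nat \<Rightarrow> bool. \<forall>j\<ge>k. \<exists>i\<in>{a j..<a (Suc j)}. x i}"
proof -
  have "closed (\<Inter>j\<in>{k..}. \<Union>i\<in>{a j..<a (Suc j)}. {x :: nat \<Rightarrow> bool. x i})"
    by (intro closed_INT ballI closed_UN finite_atLeastLessThan closed_coordinate_True)
  moreover have "{x :: nat \<Rightarrow> bool. \<forall>j\<ge>k. \<exists>i\<in>{a j..<a (Suc j)}. x i}
      = (\<Inter>j\<in>{k..}. \<Union>i\<in>{a j..<a (Suc j)}. {x. x i})"
    by blast
  ultimately show ?thesis
    by simp
qed

lemma interior_meets_intervals_from:
  fixes a :: "nat \<Rightarrow> nat"
  assumes a: "\<And>j. j \<le> a j"
  shows "interior {x :: nat \<Rightarrow> bool. \<forall>j\<ge>k. \<exists>i\<in>{a j..<a (Suc j)}. x i} = {}"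
proof (rule ccontr)
  let ?N = "{x :: nat \<Rightarrow> bool. \<forall>j\<ge>k. \<exists>i\<in>{a j..<a (Suc j)}. x i}"
  assume "interior ?N \<noteq> {}"
  then obtain x where "x \<in> interior ?N"
    by blast
  then obtain W where W: "open W" "x \<in> W" "W \<subseteq> ?N"
    by (rule interiorE)
  then have "openin (product_topology (\<lambda>i. euclidean) UNIV) W"
    by (simp add: open_fun_def)
  from product_topology_open_contains_basis[OF this W(2)]
  obtain X where X: "x \<in> PiE UNIV X" "finite {i. X i \<noteq> topspace euclidean}" "PiE UNIV X \<subseteq> W"
    by blast
  define J where "J = {i. X i \<noteq> UNIV}"
  have "finite J"
    using X(2) by (simp add: J_def)
  define j where "j = max k (Suc (Max (insert 0 J)))"
  have J_below: "i < a j" if "i \<in> J" for i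
  proof -
    have "i \<le> Max (insert 0 J)"
      using \<open>finite J\<close> that by simp
    also have "\<dots> < j"
      unfolding j_def by simp
    also have "j \<le> a j"
      by (rule a)
    finally show ?thesis .
  qed
  \<comment> \<open>Clearing the \<open>j\<close>-th interval does not touch the coordinates that \<open>W\<close> constrains.\<close>
  define y where "y = (\<lambda>i. if a j \<le> i \<and> i < a (Suc j) then False else x i)"
  have "y i \<in> X i" for i
  proof (cases "i \<in> J")
    case True
    then have "y i = x i"
      using J_below[OF True] by (simp add: y_def)
    then show ?thesis
      using X(1) by auto
  next
    case False
    then show ?thesis
      by (simp add: J_def)
  qed
  then have "y \<in> PiE UNIV X"
    by (simp add: PiE_iff)
  then have "y \<in> ?N"
    using X(3) W(3) by blast
  moreover have "k \<le> j"
    unfolding j_def by simp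
  ultimately show False
    unfolding y_def by auto
qed

lemma meager_eventually_meets_intervals:
  fixes a :: "nat \<Rightarrow> nat"
  assumes "\<And>j. j \<le> a j"
  shows "meager {x. \<exists>k. \<forall>j\<ge>k. \<exists>i\<in>{a j..<a (Suc j)}. x i}"
  unfolding meager_def
proof (intro exI conjI allI)
  let ?N = "\<lambda>k. {x :: nat \<Rightarrow> bool. \<forall>j\<ge>k. \<exists>i\<in>{a j..<a (Suc j)}. x i}"
  show "nowhere_dense (?N k)" for k
    using interior_meets_intervals_from[OF assms] closed_meets_intervals_from
    by (simp add: nowhere_dense_def)
  show "{x. \<exists>k. \<forall>j\<ge>k. \<exists>i\<in>{a j..<a (Suc j)}. x i} \<subseteq> (\<Union>k. ?N k)"
    by blast
qed

definition next_elem :: "nat set \<Rightarrow> nat \<Rightarrow> nat" where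
  "next_elem S n = (LEAST m. n \<le> m \<and> m \<in> S)"

lemma next_elem:
  assumes "infinite S"
  shows "n \<le> next_elem S n" "next_elem S n \<in> S"
proof -
  obtain m where "n \<le> m" "m \<in> S"
    using assms infinite_nat_iff_unbounded_le by blast
  then show "n \<le> next_elem S n" "next_elem S n \<in> S"
    using LeastI[of "\<lambda>m. n \<le> m \<and> m \<in> S"] unfolding next_elem_def by blast+
qed

lemma next_elem_le: "n \<le> m \<Longrightarrow> m \<in> S \<Longrightarrow> next_elem S n \<le> m"
  unfolding next_elem_def by (rule Least_le) simp

lemma meager_if_next_elem_dominated:
  assumes infinite: "\<And>A. A \<in> \<A> \<Longrightarrow> infinite A"
    and dominated: "\<And>A. A \<in> \<A> \<Longrightarrow> eventually_dominated (next_elem A) g"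
  shows "meager (char_funs \<A>)"
proof -
  \<comment> \<open>Since \<open>a (Suc j) > g (a j)\<close>, the interval \<open>[a j, a (Suc j))\<close> contains \<open>next_elem A (a j)\<close>
    as soon as \<open>g\<close> dominates \<open>next_elem A\<close> at \<open>a j\<close>.\<close>
  define a where "a j = ((\<lambda>m. Suc (max (g m) m)) ^^ j) 0" for j
  have a_Suc: "a (Suc j) = Suc (max (g (a j)) (a j))" for j
    by (simp add: a_def)
  have a_ge: "j \<le> a j" for j
    by (induction j) (simp_all add: a_Suc)
  have "char_funs \<A> \<subseteq> {x. \<exists>k. \<forall>j\<ge>k. \<exists>i\<in>{a j..<a (Suc j)}. x i}"
  proof
    fix x assume "x \<in> char_funs \<A>"
    then obtain A where A: "A \<in> \<A>" and x: "x = (\<lambda>n. n \<in> A)"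
      by (auto simp: char_funs_def)
    obtain k where k: "\<And>n. k \<le> n \<Longrightarrow> next_elem A n \<le> g n"
      using dominated[OF A] by (auto simp: eventually_dominated_def eventually_sequentially)
    have "next_elem A (a j) \<in> {a j..<a (Suc j)} \<and> x (next_elem A (a j))" if "k \<le> j" for j
      using next_elem[OF infinite[OF A], of "a j"] k[of "a j"] a_ge[of j] that
      by (auto simp: a_Suc x)
    then show "x \<in> {x. \<exists>k. \<forall>j\<ge>k. \<exists>i\<in>{a j..<a (Suc j)}. x i}"
      by blast
  qed
  then show ?thesis
    using meager_eventually_meets_intervals[OF a_ge] by (rule meager_mono[rotated])
qed

section \<open>Filters generated by small families\<close>

definition generated_filter :: "nat set set \<Rightarrow> nat set set" where
  "generated_filter \<Y> = {A. \<exists>T\<in>Fpow \<Y>. \<exists>m. \<Inter>T \<inter> {m..} \<subseteq> A}"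

lemma subset_generated_filter: "\<Y> \<subseteq> generated_filter \<Y>"
proof
  fix A assume "A \<in> \<Y>"
  then have "{A} \<in> Fpow \<Y>" "\<Inter>{A} \<inter> {0..} \<subseteq> A"
    by (auto simp: Fpow_def)
  then show "A \<in> generated_filter \<Y>"
    unfolding generated_filter_def by blast
qed

lemma nonprincipal_generated_filter: "nonprincipal (generated_filter \<Y>)"
  unfolding nonprincipal_def
proof (intro allI impI)
  fix A :: "nat set" assume "finite (UNIV - A)"
  then obtain m where "UNIV - A \<subseteq> {..<m}"
    using finite_nat_bounded by blast
  then have "\<Inter>{} \<inter> {m..} \<subseteq> A" "{} \<in> Fpow \<Y>"
    by (auto simp: Fpow_def)
  then show "A \<in> generated_filter \<Y>"
    unfolding generated_filter_def by blast
qed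

lemma generated_filter_subset:
  assumes filter: "filter_on_nat \<F>" and "nonprincipal \<F>" "\<Y> \<subseteq> \<F>"
  shows "generated_filter \<Y> \<subseteq> \<F>"
proof
  fix A assume "A \<in> generated_filter \<Y>"
  then obtain T m where T: "T \<in> Fpow \<Y>" "\<Inter>T \<inter> {m..} \<subseteq> A"
    unfolding generated_filter_def by blast
  have "\<Inter>T \<in> \<F>"
    using filter_on_nat_Inter[OF filter] Fpow_mono[OF assms(3)] T(1) by blast
  then have "\<Inter>T \<inter> {m..} \<in> \<F>"
    using filter_on_nat_Int[OF filter] nonprincipal_contains_atLeast[OF assms(2)] by blast
  then show "A \<in> \<F>"
    using filter_on_nat_mono[OF filter] T(2) by blast
qed

lemma filter_on_nat_generated_filter:
  assumes "filter_on_nat \<F>" "nonprincipal \<F>" "\<Y> \<subseteq> \<F>"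
  shows "filter_on_nat (generated_filter \<Y>)"
  unfolding filter_on_nat_def
proof (intro conjI allI impI)
  show "UNIV \<in> generated_filter \<Y>"
    using nonprincipal_generated_filter by (simp add: nonprincipal_def)
  show "{} \<notin> generated_filter \<Y>"
    using generated_filter_subset[OF assms] filter_on_nat_empty[OF assms(1)] by blast
  show "B \<in> generated_filter \<Y>" if "A \<in> generated_filter \<Y>" "A \<subseteq> B" for A B
    using that unfolding generated_filter_def by blast
  show "A \<inter> B \<in> generated_filter \<Y>" if AB: "A \<in> generated_filter \<Y>" "B \<in> generated_filter \<Y>" for A B
  proof -
    obtain T1 m1 T2 m2 where "T1 \<in> Fpow \<Y>" "\<Inter>T1 \<inter> {m1..} \<subseteq> A" "T2 \<in> Fpow \<Y>" "\<Inter>T2 \<inter> {m2..} \<subseteq> B"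
      using AB unfolding generated_filter_def by blast
    then have "T1 \<union> T2 \<in> Fpow \<Y>" "\<Inter>(T1 \<union> T2) \<inter> {max m1 m2..} \<subseteq> A \<inter> B"
      by (auto simp: Fpow_def)
    then show ?thesis
      unfolding generated_filter_def by blast
  qed
qed

lemma next_elem_generated_filter_dominated:
  assumes \<F>: "filter_on_nat \<F>" "nonprincipal \<F>" "\<Y> \<subseteq> \<F>"
    and g: "\<And>T. T \<in> Fpow \<Y> \<Longrightarrow> eventually_dominated (next_elem (\<Inter>T)) g"
    and A: "A \<in> generated_filter \<Y>"
  shows "eventually_dominated (next_elem A) g"
proof -
  obtain T m where T: "T \<in> Fpow \<Y>" "\<Inter>T \<inter> {m..} \<subseteq> A"
    using A unfolding generated_filter_def by blast
  have "\<Inter>T \<in> \<F>"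
    using filter_on_nat_Inter[OF \<F>(1)] Fpow_mono[OF \<F>(3)] T(1) by blast
  then have "infinite (\<Inter>T)"
    by (rule nonprincipal_filter_infinite[OF \<F>(1,2)])
  then have "next_elem A n \<le> next_elem (\<Inter>T) n" if "m \<le> n" for n
    using next_elem[of "\<Inter>T" n] T(2) that by (intro next_elem_le) auto
  then have "\<forall>\<^sub>F n in sequentially. next_elem A n \<le> next_elem (\<Inter>T) n"
    by (auto simp: eventually_sequentially)
  then show ?thesis
    using g[OF T(1)] unfolding eventually_dominated_def
    by eventually_elim (rule order_trans)
qed

lemma meager_generated_filter:
  assumes "filter_on_nat \<F>" "nonprincipal \<F>" "\<Y> \<subseteq> \<F>"
    and "\<And>T. T \<in> Fpow \<Y> \<Longrightarrow> eventually_dominated (next_elem (\<Inter>T)) g"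
  shows "meager (char_funs (generated_filter \<Y>))"
proof (rule meager_if_next_elem_dominated)
  show "infinite A" if "A \<in> generated_filter \<Y>" for A
    using that generated_filter_subset[OF assms(1-3)] nonprincipal_filter_infinite[OF assms(1,2)] by blast
  show "eventually_dominated (next_elem A) g" if "A \<in> generated_filter \<Y>" for A
    using next_elem_generated_filter_dominated[OF assms that] .
qed

lemma finite_family_bounded:
  assumes "finite G"
  shows "\<exists>g. \<forall>f\<in>G. eventually_dominated f g"
proof -
  define g where "g n = Max ((\<lambda>f. f n) ` G)" for n
  have "f n \<le> g n" if "f \<in> G" for f n
    unfolding g_def using assms that by (intro Max_ge) auto
  then show ?thesis
    unfolding eventually_dominated_def by (auto intro: always_eventually)
qed

lemma Fpow_indexed_family_bounded:
  assumes "|\<Y>| \<le>o |X|" and below_b: "\<And>F :: (nat \<Rightarrow> nat) set. unbounded_family F \<Longrightarrow> |X| <o |F|"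
  shows "\<exists>g. \<forall>T\<in>Fpow \<Y>. eventually_dominated (\<phi> T) g"
proof (cases "finite \<Y>")
  case True
  then show ?thesis
    using finite_family_bounded[of "\<phi> ` Fpow \<Y>"] by (simp add: Fpow_Pow_finite)
next
  case False
  have "|\<phi> ` Fpow \<Y>| \<le>o |Fpow \<Y>|"
    by (rule card_of_image)
  moreover have "|Fpow \<Y>| =o |\<Y>|"
    using False by (rule card_of_Fpow_infinite)
  ultimately have "|\<phi> ` Fpow \<Y>| \<le>o |X|"
    using assms(1) ordLeq_ordIso_trans ordLeq_transitive by blast
  then have "\<not> unbounded_family (\<phi> ` Fpow \<Y>)"
    using below_b not_ordLess_ordLeq by blast
  then show ?thesis
    unfolding unbounded_family_def by blast
qed

theorem theorem2p4:
  assumes "unif_less_b"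
  shows "\<exists>\<F>. filter_on_nat \<F> \<and> nonprincipal \<F> \<and>
           meager (char_funs \<F>) \<and> \<not> lebesgue_measurable_cantor (char_funs \<F>)"
proof -
  obtain X :: "(nat \<Rightarrow> bool) set" where X: "\<not> measure_zero_cantor X"
    and below_b: "\<And>F :: (nat \<Rightarrow> nat) set. unbounded_family F \<Longrightarrow> |X| <o |F|"
    using assms unfolding unif_less_b_def by blast
  obtain \<U> where \<U>: "filter_on_nat \<U>" "nonprincipal \<U>" "\<And>A. A \<in> \<U> \<or> - A \<in> \<U>"
    using nonprincipal_ultrafilter_exists by blast
  obtain \<Y> where \<Y>: "\<Y> \<subseteq> \<U>" "|\<Y>| \<le>o |X|" "\<not> measure_zero_cantor (char_funs \<Y>)"
    using not_null_family_in_ultrafilter[OF X \<U>(3)] by blast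
  have "\<exists>g. \<forall>T\<in>Fpow \<Y>. eventually_dominated (next_elem (\<Inter>T)) g"
    by (rule Fpow_indexed_family_bounded[OF \<Y>(2) below_b])
  then have meager: "meager (char_funs (generated_filter \<Y>))"
    using meager_generated_filter[OF \<U>(1,2) \<Y>(1)] by blast
  have filter: "filter_on_nat (generated_filter \<Y>)"
    by (rule filter_on_nat_generated_filter[OF \<U>(1,2) \<Y>(1)])
  have "\<not> lebesgue_measurable_cantor (char_funs (generated_filter \<Y>))"
  proof
    assume "lebesgue_measurable_cantor (char_funs (generated_filter \<Y>))"
    then have "measure_zero_cantor (char_funs (generated_filter \<Y>))"
      by (rule measurable_nonprincipal_filter_null[OF filter nonprincipal_generated_filter])
    moreover have "char_funs \<Y> \<subseteq> char_funs (generated_filter \<Y>)"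
      unfolding char_funs_def by (intro image_mono subset_generated_filter)
    ultimately show False
      using \<Y>(3) measure_zero_cantor_subset by blast
  qed
  then show ?thesis
    using filter nonprincipal_generated_filter meager by blast
qed

end
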